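(* Let $N\ge 1$ senders each receive an equiprobable binary input $x_i\in\{0,1\}$, and let $\theta$ satisfy $2\tan^{-1}(2^{1/N}-1)\le\theta<\pi/2$. If each sender $S_i$ sends the qubit state $|\psi_{x_i}\rangle=\cos(\theta/2)|0\rangle+(-1)^{x_i}\sin(\theta/2)|1\rangle$, then there is a $2^N$-outcome measurement $\{M_{\vec z}\}$ on the receiver's $N$ qubits with $\langle\psi_{\vec x}|M_{\vec x}|\psi_{\vec x}\rangle=0$ for all $\vec x\in\{0,1\}^N$ (where $|\psi_{\vec x}\rangle=|\psi_{x_1}\rangle\otimes\cdots\otimes|\psi_{x_N}\rangle$), so that the quantum success metric is $\widetilde{\mathcal S}_Q=1$; each sender's pair of states has anti-distinguishability $A^Q=\tfrac12(1+\sin\theta)$; while any classical strategy achieving $\widetilde{\mathcal S}_C=1$ with a common anti-distinguishability bound $A$ for all senders requires $A^C=1$. Consequently $$\left(\frac{A^C}{A^Q}\right)^N=\left(\frac{2}{1+\sin\theta}\right)^N>1.$$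
   Context: Setting: $N$ independent senders, one receiver with no input. For quantum communication, sender $S_i$ sends a state $\rho_{x_i}$ and the receiver measures a POVM $\{M_{z}\}$ on $\bigotimes_i\rho_{x_i}$, with $z$ ranging over input tuples $\vec x$. The success metric for anti-distinguishing distributed inputs is $\widetilde{\mathcal S}=1-\sum_{\vec x}q_{\vec x}\,p(z=\vec x|\vec x)$ with $q_{\vec x}=\prod_i q_{x_i}$ (here $q_{x_i}=1/2$). The anti-distinguishability of a set of states $\{\rho_{x}\}$ with prior $\{q_x\}$ is $1-\min_{\{M_z\}}\sum_z\min_x q_x\operatorname{Tr}(\rho_xM_z)$, the minimum over POVMs with as many outcomes as inputs. Classically, sender $S_i$ encodes $x_i$ into a message $m_i$ via $p_e(m_i|x_i)$ with anti-distinguishability $1-\sum_{m_i}\min_{x_i}q_{x_i}p_e(m_i|x_i)$, and the receiver decodes with $p_d(z|\vec m)$. $A^C$ is the minimal common value $A$ of the senders' anti-distinguishabilities for which a classical strategy achieves the target value of $\widetilde{\mathcal S}$ (here $1$); $A^Q$ is the common anti-distinguishability of each sender's quantum states in the quantum protocol achieving the same value. *)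

theory Defs
  imports Complex_Main "Jordan_Normal_Form.Matrix"
begin

definition mtrace :: "complex mat \<Rightarrow> complex" where
  "mtrace M = (\<Sum>i<dim_row M. M $$ (i, i))"

definition psd :: "nat \<Rightarrow> complex mat \<Rightarrow> bool" where
  "psd d M \<longleftrightarrow> M \<in> carrier_mat d d
     \<and> (\<forall>i<d. \<forall>j<d. M $$ (i, j) = cnj (M $$ (j, i)))
     \<and> (\<forall>v \<in> carrier_vec d. Im (scalar_prod (M *\<^sub>v v) (conjugate v)) = 0 \<and> 0 \<le> Re (scalar_prod (M *\<^sub>v v) (conjugate v)))"

definition povm :: "nat \<Rightarrow> 'z set \<Rightarrow> ('z \<Rightarrow> complex mat) \<Rightarrow> bool" where
  "povm d Z M \<longleftrightarrow> finite Z \<and> (\<forall>z\<in>Z. psd d (M z))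
     \<and> (\<forall>i<d. \<forall>j<d. (\<Sum>z\<in>Z. M z $$ (i, j)) = (1\<^sub>m d) $$ (i, j))"

definition braket :: "complex vec \<Rightarrow> complex mat \<Rightarrow> complex" where
  "braket \<psi> M = scalar_prod (M *\<^sub>v \<psi>) (conjugate \<psi>)"

definition dens :: "complex vec \<Rightarrow> complex mat" where
  "dens \<psi> = mat (dim_vec \<psi>) (dim_vec \<psi>) (\<lambda>(i, j). \<psi> $ i * cnj (\<psi> $ j))"

definition antidist :: "nat \<Rightarrow> 'x set \<Rightarrow> ('x \<Rightarrow> real) \<Rightarrow> ('x \<Rightarrow> complex mat) \<Rightarrow> real" where
  "antidist d X q \<rho> = 1 - (INF M \<in> {M. povm d X M}.
      (\<Sum>z\<in>X. Min ((\<lambda>x. q x * Re (mtrace (\<rho> x * M z))) ` X)))"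

definition qstate :: "real \<Rightarrow> bool \<Rightarrow> complex vec" where
  "qstate \<theta> x = vec_of_list [complex_of_real (cos (\<theta> / 2)),
                              complex_of_real ((if x then -1 else 1) * sin (\<theta> / 2))]"

text \<open>N-qubit product state |psi_x1> (x) ... (x) |psi_xN>, where the input tuple is encoded
  by k < 2^N with x_(j+1) = bit k j, and the computational basis vector with index b < 2^N
  has qubit j+1 in state |bit b j>.\<close>
definition qstateN :: "nat \<Rightarrow> real \<Rightarrow> nat \<Rightarrow> complex vec" where
  "qstateN N \<theta> k = vec (2 ^ N) (\<lambda>b. \<Prod>j<N. qstate \<theta> (bit k j) $ (if bit b j then 1 else 0))"

definition succ_Q :: "nat \<Rightarrow> real \<Rightarrow> (nat \<Rightarrow> complex mat) \<Rightarrow> real" where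
  "succ_Q N \<theta> M = 1 - (\<Sum>k<2 ^ N. (1 / 2) ^ N * Re (braket (qstateN N \<theta> k) (M k)))"

definition AQ :: "real \<Rightarrow> real" where
  "AQ \<theta> = antidist 2 (UNIV :: bool set) (\<lambda>_. 1 / 2) (\<lambda>x. dens (qstate \<theta> x))"

text \<open>Sender i (i < N) has a finite message set Ms i and encoding pe i x m = p_e(m|x);
  the receiver decodes a message tuple m (function on {..<N}) into z < 2^N with pd m z.\<close>
definition classical_strategy ::
  "nat \<Rightarrow> (nat \<Rightarrow> nat set) \<Rightarrow> (nat \<Rightarrow> bool \<Rightarrow> nat \<Rightarrow> real) \<Rightarrow> ((nat \<Rightarrow> nat) \<Rightarrow> nat \<Rightarrow> real) \<Rightarrow> bool" where
  "classical_strategy N Ms pe pd \<longleftrightarrow>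
     (\<forall>i<N. finite (Ms i) \<and> (\<forall>x. (\<forall>m\<in>Ms i. 0 \<le> pe i x m) \<and> (\<Sum>m\<in>Ms i. pe i x m) = 1))
     \<and> (\<forall>m \<in> PiE {..<N} Ms. (\<forall>z<2 ^ N. 0 \<le> pd m z) \<and> (\<Sum>z<2 ^ N. pd m z) = 1)"

text \<open>p(z | x) for the input tuple encoded by k.\<close>
definition cprob :: "nat \<Rightarrow> (nat \<Rightarrow> nat set) \<Rightarrow> (nat \<Rightarrow> bool \<Rightarrow> nat \<Rightarrow> real) \<Rightarrow> ((nat \<Rightarrow> nat) \<Rightarrow> nat \<Rightarrow> real) \<Rightarrow> nat \<Rightarrow> nat \<Rightarrow> real" where
  "cprob N Ms pe pd z k = (\<Sum>m \<in> PiE {..<N} Ms. (\<Prod>i<N. pe i (bit k i) (m i)) * pd m z)"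

definition succ_C :: "nat \<Rightarrow> (nat \<Rightarrow> nat set) \<Rightarrow> (nat \<Rightarrow> bool \<Rightarrow> nat \<Rightarrow> real) \<Rightarrow> ((nat \<Rightarrow> nat) \<Rightarrow> nat \<Rightarrow> real) \<Rightarrow> real" where
  "succ_C N Ms pe pd = 1 - (\<Sum>k<2 ^ N. (1 / 2) ^ N * cprob N Ms pe pd k k)"

definition antidist_C :: "nat set \<Rightarrow> (bool \<Rightarrow> nat \<Rightarrow> real) \<Rightarrow> real" where
  "antidist_C Ms e = 1 - (\<Sum>m\<in>Ms. Min ((\<lambda>x. (1 / 2) * e x m) ` UNIV))"

definition AC :: "nat \<Rightarrow> real" where
  "AC N = Inf {A. \<exists>Ms pe pd. classical_strategy N Ms pe pd \<and> succ_C N Ms pe pd = 1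
                     \<and> (\<forall>i<N. antidist_C (Ms i) (pe i) = A)}"

end

theory Submission
  imports Defs
begin

(* Write c = cos(theta/2), s = sin(theta/2) and |j| for the number of ones of j < 2^N.
   Twisting the N-qubit Hadamard basis by a diagonal unitary diag(u_j), |u_j| = 1, gives an
   orthonormal basis phi_k.  The Hadamard signs cancel the signs of psi_k, so <psi_k|phi_k> is
   proportional to sum_j u_j c^(N-|j|) s^|j|, independently of k.  For u_j = v^|j| (j > 0) and
   u_0 = w this sum is (c + s v)^N + (w - 1) c^N, and unit v, w making it vanish exist by the
   intermediate value theorem once (c + s)^N >= 2 c^N, i.e. tan(theta/2) >= 2^(1/N) - 1.
   For one pair of states, positivity of a two-outcome POVM bounds its error from below by
   (1 - sin theta)/2, which the Hadamard basis attains.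
   Classically, if every sender's anti-distinguishability were below 1, each sender would have a
   message sent with positive probability under both inputs; the receiver answers some z with
   positive probability on that message tuple, and input z produces it, so S_C < 1. *)

lemma dens_mult_vec_inner:
  assumes "dim_vec v = dim_vec \<psi>"
  shows "(dens \<psi> *\<^sub>v v) \<bullet>c v = of_real (cmod (\<Sum>i<dim_vec \<psi>. \<psi> $ i * cnj (v $ i)) ^ 2)"
proof -
  define z where "z = (\<Sum>i<dim_vec \<psi>. \<psi> $ i * cnj (v $ i))"
  have "(dens \<psi> *\<^sub>v v) \<bullet>c v = (\<Sum>i<dim_vec \<psi>. \<psi> $ i * cnj (v $ i) * cnj z)"
    using assms by (simp add: scalar_prod_def dens_def row_def sum_distrib_left atLeast0LessThan
        mult_ac z_def)
  also have "\<dots> = z * cnj z"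
    unfolding z_def sum_distrib_right[symmetric] ..
  finally show ?thesis
    unfolding z_def[symmetric] complex_norm_square .
qed

lemma braket_dens:
  assumes "dim_vec \<psi> = dim_vec \<phi>"
  shows "braket \<psi> (dens \<phi>) = of_real (cmod (\<Sum>i<dim_vec \<phi>. \<phi> $ i * cnj (\<psi> $ i)) ^ 2)"
  unfolding braket_def by (rule dens_mult_vec_inner[OF assms])

lemma psd_dens:
  assumes "\<psi> \<in> carrier_vec d"
  shows "psd d (dens \<psi>)"
  unfolding psd_def
proof (intro conjI allI impI ballI)
  show "dens \<psi> \<in> carrier_mat d d"
    "\<And>i j. i < d \<Longrightarrow> j < d \<Longrightarrow> dens \<psi> $$ (i, j) = cnj (dens \<psi> $$ (j, i))"
    using assms by (auto simp: dens_def)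
next
  fix v :: "complex vec"
  assume "v \<in> carrier_vec d"
  then have "dim_vec v = dim_vec \<psi>" using assms by simp
  from dens_mult_vec_inner[OF this]
  show "Im ((dens \<psi> *\<^sub>v v) \<bullet>c v) = 0" "0 \<le> Re ((dens \<psi> *\<^sub>v v) \<bullet>c v)"
    by simp_all
qed

lemma povm_dens_resolution:
  assumes "finite Z" and \<phi>: "\<And>z. z \<in> Z \<Longrightarrow> \<phi> z \<in> carrier_vec d"
    and "\<And>i j. i < d \<Longrightarrow> j < d \<Longrightarrow> (\<Sum>z\<in>Z. \<phi> z $ i * cnj (\<phi> z $ j)) = 1\<^sub>m d $$ (i, j)"
  shows "povm d Z (\<lambda>z. dens (\<phi> z))"
proof -
  have "dens (\<phi> z) $$ (i, j) = \<phi> z $ i * cnj (\<phi> z $ j)" if "z \<in> Z" "i < d" "j < d" for z i j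
    using \<phi>[OF that(1)] that(2,3) by (simp add: dens_def)
  then show ?thesis
    unfolding povm_def using assms by (simp add: psd_dens)
qed

section \<open>Anti-distinguishing two qubit states\<close>

lemma Re_mtrace_dens_qstate:
  assumes "E \<in> carrier_mat 2 2"
  shows "Re (mtrace (dens (qstate \<theta> x) * E))
    = cos (\<theta> / 2) ^ 2 * Re (E $$ (0, 0)) + sin (\<theta> / 2) ^ 2 * Re (E $$ (1, 1))
      + (if x then -1 else 1) * (sin \<theta> / 2) * Re (E $$ (0, 1) + E $$ (1, 0))"
proof -
  have "sin \<theta> / 2 = sin (\<theta> / 2) * cos (\<theta> / 2)"
    using sin_double[of "\<theta> / 2"] by simp
  then show ?thesis
    using assms
    by (simp add: mtrace_def dens_def qstate_def index_mult_mat scalar_prod_def numeral_2_eq_2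
        power2_eq_square algebra_simps)
qed

lemma psd2_abs_Re_offdiag_le:
  assumes "psd 2 E"
  shows "\<bar>Re (E $$ (0, 1) + E $$ (1, 0))\<bar> \<le> Re (E $$ (0, 0) + E $$ (1, 1))"
proof -
  have E: "E \<in> carrier_mat 2 2"
    using assms unfolding psd_def by blast
  have "0 \<le> Re (E $$ (0, 0) + E $$ (1, 1)) + r * Re (E $$ (0, 1) + E $$ (1, 0))"
    if "r = 1 \<or> r = -1" for r :: real
  proof -
    define e where "e = vec 2 (\<lambda>i. if i = 0 then 1 else complex_of_real r)"
    have "0 \<le> Re ((E *\<^sub>v e) \<bullet>c e)"
      using assms unfolding psd_def e_def by simp
    also have "Re ((E *\<^sub>v e) \<bullet>c e) = Re (E $$ (0, 0) + E $$ (1, 1)) + r * Re (E $$ (0, 1) + E $$ (1, 0))"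
      using E that unfolding e_def
      by (auto simp: scalar_prod_def numeral_2_eq_2 row_def algebra_simps)
    finally show ?thesis .
  qed
  from this[of 1] this[of "-1"] show ?thesis
    by linarith
qed

definition qstate_antidist_error :: "real \<Rightarrow> (bool \<Rightarrow> complex mat) \<Rightarrow> real" where
  "qstate_antidist_error \<theta> M
     = (\<Sum>z\<in>UNIV. Min ((\<lambda>x. 1 / 2 * Re (mtrace (dens (qstate \<theta> x) * M z))) ` UNIV))"

lemma AQ_eq_1_minus_INF_error:
  "AQ \<theta> = 1 - (INF M \<in> {M. povm 2 UNIV M}. qstate_antidist_error \<theta> M)"
  by (simp add: AQ_def antidist_def qstate_antidist_error_def)

lemma qstate_antidist_error_ge:
  assumes M: "povm 2 UNIV M" and sin: "0 \<le> sin \<theta>"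
  shows "(1 - sin \<theta>) / 2 \<le> qstate_antidist_error \<theta> M"
proof -
  define p where "p x E = Re (mtrace (dens (qstate \<theta> x) * E))" for x E
  define F T where "F = M False" and "T = M True"
  have psd: "psd 2 F" "psd 2 T"
    using M unfolding povm_def F_def T_def by auto
  then have carrier: "F \<in> carrier_mat 2 2" "T \<in> carrier_mat 2 2"
    unfolding psd_def by auto
  have "F $$ (i, j) + T $$ (i, j) = 1\<^sub>m 2 $$ (i, j)" if "i < 2" "j < 2" for i j
    using M that unfolding povm_def F_def T_def by (simp add: UNIV_bool add.commute)
  then have T: "T $$ (0, 0) = 1 - F $$ (0, 0)" "T $$ (1, 1) = 1 - F $$ (1, 1)"
    "T $$ (0, 1) = - F $$ (0, 1)" "T $$ (1, 0) = - F $$ (1, 0)"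
    by (auto simp: eq_diff_eq eq_neg_iff_add_eq_0 add.commute)
  define X where "X = Re (F $$ (0, 1) + F $$ (1, 0))"
  (* Since T = 1 - F, the cross sums below are 1 \<plusminus> X sin \<theta>, and positivity of both F and T
     gives |X| \<le> 1. *)
  have "\<bar>X\<bar> \<le> Re (F $$ (0, 0) + F $$ (1, 1))" "\<bar>X\<bar> \<le> 2 - Re (F $$ (0, 0) + F $$ (1, 1))"
    using psd2_abs_Re_offdiag_le[OF psd(1)] psd2_abs_Re_offdiag_le[OF psd(2)]
    unfolding X_def T by simp_all
  then have "\<bar>sin \<theta> * X\<bar> \<le> sin \<theta>"
    using sin by (simp add: abs_mult mult_left_le)
  moreover have "p False F + p False T = 1" "p True F + p True T = 1"
    "p False F + p True T = 1 + sin \<theta> * X" "p True F + p False T = 1 - sin \<theta> * X"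
    using sin_cos_squared_add[of "\<theta> / 2"]
    unfolding p_def Re_mtrace_dens_qstate[OF carrier(1)] Re_mtrace_dens_qstate[OF carrier(2)] T X_def
    by (simp_all add: algebra_simps)
  moreover have "qstate_antidist_error \<theta> M
      = min (p False F / 2) (p True F / 2) + min (p False T / 2) (p True T / 2)"
    by (simp add: qstate_antidist_error_def p_def UNIV_bool F_def T_def)
  ultimately show ?thesis
    using sin by (simp add: min_def abs_le_iff)
qed

lemma AQ_eq:
  assumes "0 \<le> sin \<theta>"
  shows "AQ \<theta> = (1 + sin \<theta>) / 2"
proof -
  define r :: real where "r = 1 / sqrt 2"
  define M where "M z = dens (vec 2 (\<lambda>i. of_real (if i = 0 \<or> z then r else - r)))" for z
  have r: "r * r = 1 / 2"
    unfolding r_def by simp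
  have "povm 2 UNIV M"
    unfolding M_def
    by (intro povm_dens_resolution) (auto simp: UNIV_bool less_2_cases_iff r simp flip: of_real_mult)
  moreover have "qstate_antidist_error \<theta> M = (1 - sin \<theta>) / 2"
  proof -
    have E: "M z \<in> carrier_mat 2 2"
      and entries: "Re (M z $$ (0, 0)) = 1 / 2" "Re (M z $$ (1, 1)) = 1 / 2"
        "Re (M z $$ (0, 1) + M z $$ (1, 0)) = (if z then 1 else -1)" for z
      unfolding M_def dens_def by (auto simp: r simp flip: of_real_mult)
    have "Re (mtrace (dens (qstate \<theta> x) * M z)) = (1 + (if x = z then - sin \<theta> else sin \<theta>)) / 2"
      for x z
      unfolding Re_mtrace_dens_qstate[OF E] entries using sin_cos_squared_add2[of "\<theta> / 2"]
      by (cases x; cases z) (simp_all add: field_simps)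
    then show ?thesis
      using assms by (simp add: qstate_antidist_error_def UNIV_bool min_def)
  qed
  ultimately have "(INF M \<in> {M. povm 2 UNIV M}. qstate_antidist_error \<theta> M) = (1 - sin \<theta>) / 2"
    using qstate_antidist_error_ge[OF _ assms] by (intro cInf_eq_minimum) (force, blast)
  then show ?thesis
    unfolding AQ_eq_1_minus_INF_error by simp
qed

section \<open>An anti-distinguishing measurement on N qubits\<close>

lemma sum_lessThan_double: "(\<Sum>k<2 * n. g k) = (\<Sum>k<n. g (2 * k) + g (2 * k + 1))"
  for g :: "nat \<Rightarrow> 'a::comm_monoid_add"
  by (induction n) (simp_all add: add.assoc)

lemma sum_prod_bit_eq_prod_sum:
  fixes f :: "nat \<Rightarrow> bool \<Rightarrow> 'a::comm_semiring_1"
  shows "(\<Sum>k<(2::nat) ^ N. \<Prod>j<N. f j (bit k j)) = (\<Prod>j<N. f j False + f j True)"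
proof (induction N arbitrary: f)
  case 0
  show ?case by simp
next
  case (Suc N)
  have bits: "bit (2 * k) 0 = False" "bit (2 * k + 1) 0 = True"
    "bit (2 * k) (Suc j) = bit k j" "bit (2 * k + 1) (Suc j) = bit k j" for k j :: nat
    by (simp_all add: bit_Suc bit_0)
  have "(\<Sum>k<(2::nat) ^ Suc N. \<Prod>j<Suc N. f j (bit k j))
      = (\<Sum>k<(2::nat) ^ N. (f 0 False + f 0 True) * (\<Prod>j<N. f (Suc j) (bit k j)))"
    by (simp only: power_Suc sum_lessThan_double prod.lessThan_Suc_shift bits distrib_right)
  also have "\<dots> = (\<Prod>j<Suc N. f j False + f j True)"
    by (simp only: sum_distrib_left[symmetric] Suc.IH[of "\<lambda>j. f (Suc j)"] prod.lessThan_Suc_shift)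
  finally show ?case .
qed

lemma nat_eq_if_bits_below_eq:
  fixes i j :: nat
  assumes "i < 2 ^ N" "j < 2 ^ N" "\<And>l. l < N \<Longrightarrow> bit i l = bit j l"
  shows "i = j"
proof -
  have "take_bit N i = take_bit N j"
    using assms(3) by (auto simp: bit_eq_iff bit_take_bit_iff)
  then show ?thesis
    using assms(1,2) by (simp add: take_bit_nat_eq_self)
qed

definition hadamard_sign :: "nat \<Rightarrow> nat \<Rightarrow> nat \<Rightarrow> complex" where
  "hadamard_sign N k j = (\<Prod>l<N. if bit k l \<and> bit j l then -1 else 1)"

lemma cnj_hadamard_sign [simp]: "cnj (hadamard_sign N k j) = hadamard_sign N k j"
  unfolding hadamard_sign_def by (simp add: if_distrib cong: if_cong)

lemma sum_hadamard_sign_mult: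
  assumes "i < 2 ^ N" "j < 2 ^ N"
  shows "(\<Sum>k<(2::nat) ^ N. hadamard_sign N k i * hadamard_sign N k j) = (if i = j then 2 ^ N else 0)"
proof -
  let ?sg = "\<lambda>b. if b then -1 else 1 :: complex"
  have "(\<Sum>k<(2::nat) ^ N. hadamard_sign N k i * hadamard_sign N k j)
      = (\<Sum>k<(2::nat) ^ N. \<Prod>l<N. (if bit k l \<and> bit i l then -1 else 1) * (if bit k l \<and> bit j l then -1 else 1))"
    unfolding hadamard_sign_def by (simp add: prod.distrib)
  also have "\<dots> = (\<Prod>l<N. 1 + ?sg (bit i l) * ?sg (bit j l))"
    by (subst sum_prod_bit_eq_prod_sum) simp
  also have "\<dots> = (if i = j then 2 ^ N else 0)"
  proof (cases "i = j")
    case True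
    then show ?thesis by (simp add: if_distrib cong: if_cong)
  next
    case False
    then obtain l where "l < N" "bit i l \<noteq> bit j l"
      using nat_eq_if_bits_below_eq assms by blast
    then show ?thesis
      using False by (intro trans[OF prod_zero]) (auto intro!: bexI[of _ l])
  qed
  finally show ?thesis .
qed

definition phased_hadamard_vec :: "nat \<Rightarrow> (nat \<Rightarrow> complex) \<Rightarrow> nat \<Rightarrow> complex vec" where
  "phased_hadamard_vec N u k
     = vec (2 ^ N) (\<lambda>j. u j * hadamard_sign N k j / of_real (sqrt (2 ^ N)))"

lemma povm_phased_hadamard:
  assumes "\<And>j. cmod (u j) = 1"
  shows "povm (2 ^ N) {..<2 ^ N} (\<lambda>k. dens (phased_hadamard_vec N u k))"
proof (rule povm_dens_resolution)
  fix i j :: nat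
  assume ij: "i < 2 ^ N" "j < 2 ^ N"
  have norm: "of_real (sqrt (2 ^ N)) * of_real (sqrt (2 ^ N)) = (2 ^ N :: complex)"
    by (simp flip: of_real_mult)
  have "(\<Sum>k<2 ^ N. phased_hadamard_vec N u k $ i * cnj (phased_hadamard_vec N u k $ j))
      = u i * cnj (u j) / 2 ^ N * (\<Sum>k<(2::nat) ^ N. hadamard_sign N k i * hadamard_sign N k j)"
    using ij unfolding phased_hadamard_vec_def
    by (simp add: sum_distrib_left sum_divide_distrib field_simps norm)
  also have "\<dots> = 1\<^sub>m (2 ^ N) $$ (i, j)"
    using ij assms by (simp add: sum_hadamard_sign_mult complex_mult_cnj cmod_def)
  finally show "(\<Sum>k<2 ^ N. phased_hadamard_vec N u k $ i * cnj (phased_hadamard_vec N u k $ j))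
      = 1\<^sub>m (2 ^ N) $$ (i, j)" .
qed (auto simp: phased_hadamard_vec_def)

lemma hadamard_sign_mult_qstateN:
  assumes "i < 2 ^ N"
  shows "hadamard_sign N k i * cnj (qstateN N \<theta> k $ i)
    = (\<Prod>l<N. (if bit i l then of_real (sin (\<theta> / 2)) else of_real (cos (\<theta> / 2))))"
proof -
  have "qstate \<theta> x $ (if b then 1 else 0)
      = of_real (if b then (if x then -1 else 1) * sin (\<theta> / 2) else cos (\<theta> / 2))" for x b
    by (simp add: qstate_def)
  then show ?thesis
    using assms unfolding hadamard_sign_def qstateN_def
    by (simp add: cnj_prod flip: prod.distrib) (intro prod.cong; simp)
qed

lemma phased_hadamard_overlap_qstateN:
  "(\<Sum>i<2 ^ N. phased_hadamard_vec N u k $ i * cnj (qstateN N \<theta> k $ i))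
    = (\<Sum>i<2 ^ N. u i * (\<Prod>l<N. (if bit i l then of_real (sin (\<theta> / 2)) else of_real (cos (\<theta> / 2)))))
        / of_real (sqrt (2 ^ N))"
  unfolding sum_divide_distrib
proof (rule sum.cong)
  fix i :: nat
  assume "i \<in> {..<2 ^ N}"
  then show "phased_hadamard_vec N u k $ i * cnj (qstateN N \<theta> k $ i)
    = u i * (\<Prod>l<N. (if bit i l then of_real (sin (\<theta> / 2)) else of_real (cos (\<theta> / 2)))) / of_real (sqrt (2 ^ N))"
    using hadamard_sign_mult_qstateN[of i N k \<theta>]
    by (simp add: phased_hadamard_vec_def mult.assoc)
qed simp

lemma sum_bit_phases_mult_weights:
  fixes c s v w :: "'a::comm_ring_1"
  shows "(\<Sum>i<(2::nat) ^ N. ((\<Prod>l<N. if bit i l then v else 1) + (if i = 0 then w - 1 else 0))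
            * (\<Prod>l<N. if bit i l then s else c))
    = (c + s * v) ^ N + (w - 1) * c ^ N"
proof -
  have "(\<Sum>i<(2::nat) ^ N. (\<Prod>l<N. if bit i l then v else 1) * (\<Prod>l<N. if bit i l then s else c))
      = (c + s * v) ^ N"
    using sum_prod_bit_eq_prod_sum[of "\<lambda>_ b. if b then s * v else c" N]
    by (simp add: mult.commute add.commute if_distrib flip: prod.distrib cong: if_cong)
  moreover have "(\<Sum>i<(2::nat) ^ N. (if i = 0 then w - 1 else 0) * (\<Prod>l<N. if bit i l then s else c))
      = (w - 1) * c ^ N"
    by (simp add: if_distrib[where f="\<lambda>x. x * _"] cong: if_cong)
  ultimately show ?thesis
    by (simp add: distrib_right sum.distrib)
qed

lemma exists_unit_phases_cancelling:
  fixes c s :: real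
  assumes c: "c > 0" and s: "0 \<le> s" "s \<le> c" and pow: "2 * c ^ N \<le> (c + s) ^ N"
  shows "\<exists>v w::complex. cmod v = 1 \<and> cmod w = 1
           \<and> (of_real c + of_real s * v) ^ N + (w - 1) * of_real c ^ N = 0"
proof -
  define f where "f \<alpha> = cmod ((of_real c + of_real s * cis \<alpha>) ^ N - of_real c ^ N)" for \<alpha>
  have "(of_real c + of_real s * cis 0) ^ N - of_real c ^ N = complex_of_real ((c + s) ^ N - c ^ N)"
    "(of_real c + of_real s * cis pi) ^ N - of_real c ^ N = complex_of_real ((c - s) ^ N - c ^ N)"
    by simp_all
  moreover have "(c - s) ^ N \<le> c ^ N"
    using s by (intro power_mono) auto
  ultimately have "f pi \<le> c ^ N" "c ^ N \<le> f 0"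
    using pow s unfolding f_def by (simp_all only: norm_of_real) auto
  moreover have "continuous_on {0..pi} f"
    unfolding f_def by (intro continuous_intros)
  ultimately obtain \<alpha> where \<alpha>: "f \<alpha> = c ^ N"
    using IVT2'[of f pi "c ^ N" 0] pi_ge_zero by auto
  define w where "w = 1 - (of_real c + of_real s * cis \<alpha>) ^ N / of_real c ^ N"
  have cN: "complex_of_real c ^ N \<noteq> 0"
    using c by simp
  have "w = (of_real c ^ N - (of_real c + of_real s * cis \<alpha>) ^ N) / of_real c ^ N"
    unfolding w_def using cN by (simp add: field_simps)
  then have "cmod w = f \<alpha> / c ^ N"
    unfolding f_def using c by (simp add: norm_divide norm_power norm_minus_commute)
  then have "cmod w = 1"
    using \<alpha> c by simp
  moreover have "(of_real c + of_real s * cis \<alpha>) ^ N + (w - 1) * of_real c ^ N = 0"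
    unfolding w_def using cN by (simp add: field_simps)
  ultimately show ?thesis
    by (intro exI[of _ "cis \<alpha>"] exI[of _ w]) simp
qed

lemma exists_antidistinguishing_povm:
  fixes \<theta> :: real
  defines "c \<equiv> cos (\<theta> / 2)" and "s \<equiv> sin (\<theta> / 2)"
  assumes "c > 0" "0 \<le> s" "s \<le> c" "2 * c ^ N \<le> (c + s) ^ N"
  shows "\<exists>M. povm (2 ^ N) {..<2 ^ N} M \<and> (\<forall>k<2 ^ N. braket (qstateN N \<theta> k) (M k) = 0)"
proof -
  obtain v w :: complex where v: "cmod v = 1" and w: "cmod w = 1"
    and cancel: "(of_real c + of_real s * v) ^ N + (w - 1) * of_real c ^ N = 0"
    using exists_unit_phases_cancelling assms by blast
  define u where "u j = (\<Prod>l<N. if bit j l then v else 1) + (if j = 0 then w - 1 else 0)" for j :: nat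
  have u: "cmod (u j) = 1" for j
  proof (cases "j = 0")
    case True
    then show ?thesis using w by (simp add: u_def)
  next
    case False
    have "cmod (\<Prod>l<N. if bit j l then v else 1) = 1"
      unfolding prod_norm[symmetric] using v by (intro prod.neutral) simp
    then show ?thesis using v False by (simp add: u_def)
  qed
  have "braket (qstateN N \<theta> k) (dens (phased_hadamard_vec N u k)) = 0" for k
  proof -
    have "dim_vec (qstateN N \<theta> k) = dim_vec (phased_hadamard_vec N u k)"
      by (simp add: phased_hadamard_vec_def qstateN_def)
    from braket_dens[OF this]
    have "braket (qstateN N \<theta> k) (dens (phased_hadamard_vec N u k))
        = of_real (cmod (\<Sum>i<2 ^ N. phased_hadamard_vec N u k $ i * cnj (qstateN N \<theta> k $ i)) ^ 2)"
      by (simp add: phased_hadamard_vec_def)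
    also have "(\<Sum>i<2 ^ N. phased_hadamard_vec N u k $ i * cnj (qstateN N \<theta> k $ i))
        = ((of_real c + of_real s * v) ^ N + (w - 1) * of_real c ^ N) / of_real (sqrt (2 ^ N))"
      unfolding phased_hadamard_overlap_qstateN u_def c_def s_def
      by (rule arg_cong[where f="\<lambda>x. x / _"], rule sum_bit_phases_mult_weights)
    finally show ?thesis
      unfolding cancel by simp
  qed
  then show ?thesis
    using povm_phased_hadamard[OF u] by (intro exI[of _ "\<lambda>k. dens (phased_hadamard_vec N u k)"]) simp
qed

section \<open>Classical strategies\<close>

lemma antidist_C_bool: "antidist_C Ms e = 1 - (\<Sum>m\<in>Ms. min (e False m / 2) (e True m / 2))"
  by (simp add: antidist_C_def UNIV_bool)

lemma common_message_if_antidist_C_less_1: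
  assumes "antidist_C Ms e < 1"
  shows "\<exists>m\<in>Ms. 0 < e False m \<and> 0 < e True m"
proof (rule ccontr)
  assume "\<not> ?thesis"
  then have "(\<Sum>m\<in>Ms. min (e False m / 2) (e True m / 2)) \<le> 0"
    by (intro sum_nonpos) (auto simp: min_def)
  then show False
    using assms by (simp add: antidist_C_bool)
qed

lemma cprob_term_nonneg:
  assumes "classical_strategy N Ms pe pd" "m \<in> PiE {..<N} Ms" "z < 2 ^ N"
  shows "0 \<le> (\<Prod>i<N. pe i (bit k i) (m i)) * pd m z"
  using assms unfolding classical_strategy_def
  by (intro mult_nonneg_nonneg prod_nonneg) (auto simp: PiE_def Pi_def)

lemma cprob_diag_eq_0_if_succ_C_eq_1:
  assumes cs: "classical_strategy N Ms pe pd" and "succ_C N Ms pe pd = 1" and "k < 2 ^ N"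
  shows "cprob N Ms pe pd k k = 0"
proof -
  have "0 \<le> cprob N Ms pe pd k k" if "k < 2 ^ N" for k
    unfolding cprob_def using cprob_term_nonneg[OF cs _ that] by (intro sum_nonneg) auto
  moreover have "(\<Sum>k<2 ^ N. (1 / 2) ^ N * cprob N Ms pe pd k k) = 0"
    using assms(2) unfolding succ_C_def by simp
  ultimately show ?thesis
    using assms(3) by (subst (asm) sum_nonneg_eq_0_iff) auto
qed

lemma perfect_classical_strategy_antidist_C_ge_1:
  assumes cs: "classical_strategy N Ms pe pd" and succ: "succ_C N Ms pe pd = 1"
  shows "\<exists>i<N. 1 \<le> antidist_C (Ms i) (pe i)"
proof (rule ccontr)
  assume "\<not> ?thesis"
  then have "\<forall>i\<in>{..<N}. \<exists>m. m \<in> Ms i \<and> 0 < pe i False m \<and> 0 < pe i True m"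
    by (auto intro!: common_message_if_antidist_C_less_1[unfolded Bex_def] simp: not_le)
  from bchoice[OF this]
  obtain m where m: "\<forall>i\<in>{..<N}. m i \<in> Ms i \<and> 0 < pe i False (m i) \<and> 0 < pe i True (m i)"
    by blast
  define m' where "m' = restrict m {..<N}"
  have m': "m' \<in> PiE {..<N} Ms"
    using m unfolding m'_def by auto
  have "\<exists>z<2 ^ N. 0 < pd m' z"
  proof (rule ccontr)
    assume "\<not> ?thesis"
    then have "(\<Sum>z<2 ^ N. pd m' z) \<le> 0"
      by (intro sum_nonpos) auto
    then show False
      using cs m' unfolding classical_strategy_def by simp
  qed
  then obtain z where z: "z < 2 ^ N" "0 < pd m' z"
    by blast
  have "0 < pe i (bit z i) (m' i)" if "i < N" for i
    using m that unfolding m'_def by (cases "bit z i") auto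
  then have "0 < (\<Prod>i<N. pe i (bit z i) (m' i)) * pd m' z"
    using z(2) by (intro mult_pos_pos prod_pos) auto
  moreover have "finite (PiE {..<N} Ms)"
    using cs unfolding classical_strategy_def by (intro finite_PiE) auto
  ultimately have "0 < cprob N Ms pe pd z z"
    unfolding cprob_def using cprob_term_nonneg[OF cs _ z(1)] by (intro sum_pos2[OF _ m'])
  then show False
    using cprob_diag_eq_0_if_succ_C_eq_1[OF cs succ z(1)] by simp
qed

lemma exists_perfect_classical_strategy:
  assumes "1 \<le> N"
  shows "\<exists>Ms pe pd. classical_strategy N Ms pe pd \<and> succ_C N Ms pe pd = 1
           \<and> (\<forall>i<N. antidist_C (Ms i) (pe i) = 1)"
proof -
  define Ms :: "nat \<Rightarrow> nat set" where "Ms i = {0, 1}" for i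
  define pe :: "nat \<Rightarrow> bool \<Rightarrow> nat \<Rightarrow> real" where "pe i x m = of_bool (m = of_bool x)" for i x m
  (* Each sender transmits its bit; the receiver outputs 1 - m 0, which contradicts the first input. *)
  define pd :: "(nat \<Rightarrow> nat) \<Rightarrow> nat \<Rightarrow> real" where "pd m z = of_bool (z = 1 - m 0)" for m z
  have "1 - m 0 < 2 ^ N" for m :: "nat \<Rightarrow> nat"
    using one_less_power[of "2::nat" N] assms by linarith
  then have "classical_strategy N Ms pe pd"
    unfolding classical_strategy_def Ms_def pe_def pd_def by (auto simp: sum.delta')
  moreover have "cprob N Ms pe pd k k = 0" for k
    unfolding cprob_def
  proof (intro sum.neutral ballI)
    fix m
    have "pe 0 (bit k 0) (m 0) = 0 \<or> pd m k = 0"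
      unfolding pe_def pd_def by (auto simp: bit_0 dest: odd_pos)
    then show "(\<Prod>i<N. pe i (bit k i) (m i)) * pd m k = 0"
      using assms by (auto intro!: prod_zero bexI[of _ 0])
  qed
  then have "succ_C N Ms pe pd = 1"
    unfolding succ_C_def by simp
  moreover have "antidist_C (Ms i) (pe i) = 1" for i
    unfolding antidist_C_bool Ms_def pe_def by simp
  ultimately show ?thesis
    by blast
qed

lemma AC_eq_1:
  assumes "1 \<le> N"
  shows "AC N = 1"
  unfolding AC_def
proof (rule cInf_eq_minimum)
  show "1 \<in> {A. \<exists>Ms pe pd. classical_strategy N Ms pe pd \<and> succ_C N Ms pe pd = 1
                     \<and> (\<forall>i<N. antidist_C (Ms i) (pe i) = A)}"
    using exists_perfect_classical_strategy[OF assms] by simp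
next
  fix A
  assume "A \<in> {A. \<exists>Ms pe pd. classical_strategy N Ms pe pd \<and> succ_C N Ms pe pd = 1
                     \<and> (\<forall>i<N. antidist_C (Ms i) (pe i) = A)}"
  then show "1 \<le> A"
    using perfect_classical_strategy_antidist_C_ge_1 by fastforce
qed

lemma cos_sin_half_bounds:
  assumes "0 \<le> \<theta>" "\<theta> \<le> pi / 2"
  shows "0 < cos (\<theta> / 2)" "0 \<le> sin (\<theta> / 2)" "sin (\<theta> / 2) \<le> cos (\<theta> / 2)"
proof -
  have "- (pi / 2) < \<theta> / 2" "\<theta> / 2 < pi / 2"
    using assms pi_gt_zero by linarith+
  then show "0 < cos (\<theta> / 2)" "0 \<le> sin (\<theta> / 2)"
    using assms by (auto intro!: cos_gt_zero_pi sin_ge_zero)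
  have "sin (\<theta> / 2) \<le> sin (pi / 2 - \<theta> / 2)"
    using assms by (intro sin_monotone_2pi_le) auto
  then show "sin (\<theta> / 2) \<le> cos (\<theta> / 2)"
    by (simp add: sin_cos_eq)
qed

lemma two_mult_cos_half_pow_le:
  assumes "1 \<le> N" "2 * arctan (2 powr (1 / real N) - 1) \<le> \<theta>" "\<theta> < pi"
  shows "2 * cos (\<theta> / 2) ^ N \<le> (cos (\<theta> / 2) + sin (\<theta> / 2)) ^ N"
proof -
  define t where "t = 2 powr (1 / real N) - 1"
  have "0 \<le> t"
    unfolding t_def by (simp add: ge_one_powr_ge_zero)
  then have "0 \<le> arctan t"
    by (simp add: arctan_le_iff[of 0, simplified])
  then have c: "0 < cos (\<theta> / 2)"
    using assms(2,3) unfolding t_def[symmetric] by (intro cos_gt_zero_pi) linarith+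
  have "t \<le> tan (\<theta> / 2)"
    using assms(2,3) arctan_lbound[of t] unfolding t_def[symmetric]
    by (subst tan_arctan[of t, symmetric]) (intro tan_mono_le; linarith)
  then have "2 powr (1 / real N) \<le> (cos (\<theta> / 2) + sin (\<theta> / 2)) / cos (\<theta> / 2)"
    using c unfolding t_def tan_def by (simp add: add_divide_distrib)
  then have "(2 powr (1 / real N)) ^ N \<le> ((cos (\<theta> / 2) + sin (\<theta> / 2)) / cos (\<theta> / 2)) ^ N"
    by (intro power_mono) auto
  then show ?thesis
    using assms(1) c by (simp add: powr_power power_divide le_divide_eq)
qed

theorem theorem2:
  fixes N :: nat and \<theta> :: real
  assumes "N \<ge> 1"
    and "2 * arctan (2 powr (1 / real N) - 1) \<le> \<theta>"
    and "\<theta> < pi / 2"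
  shows "(\<exists>M. povm (2 ^ N) {..<2 ^ N} M
              \<and> (\<forall>k<2 ^ N. braket (qstateN N \<theta> k) (M k) = 0)
              \<and> succ_Q N \<theta> M = 1)
       \<and> AQ \<theta> = (1 + sin \<theta>) / 2
       \<and> AC N = 1
       \<and> (AC N / AQ \<theta>) ^ N = (2 / (1 + sin \<theta>)) ^ N
       \<and> (2 / (1 + sin \<theta>)) ^ N > 1"
proof -
  have "0 \<le> arctan (2 powr (1 / real N) - 1)"
    by (simp add: arctan_le_iff[of 0, simplified] ge_one_powr_ge_zero)
  then have "0 \<le> \<theta>"
    using assms(2) by linarith
  then have sin: "0 \<le> sin \<theta>" "sin \<theta> < 1"
    using assms(3) sin_monotone_2pi[of \<theta> "pi / 2"] by (auto intro: sin_ge_zero)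
  have half: "0 < cos (\<theta> / 2)" "0 \<le> sin (\<theta> / 2)" "sin (\<theta> / 2) \<le> cos (\<theta> / 2)"
    using cos_sin_half_bounds \<open>0 \<le> \<theta>\<close> assms(3) by auto
  have "2 * cos (\<theta> / 2) ^ N \<le> (cos (\<theta> / 2) + sin (\<theta> / 2)) ^ N"
    using two_mult_cos_half_pow_le[OF assms(1,2)] assms(3) pi_gt_zero by linarith
  with half obtain M where "povm (2 ^ N) {..<2 ^ N} M"
    and M: "\<forall>k<2 ^ N. braket (qstateN N \<theta> k) (M k) = 0"
    using exists_antidistinguishing_povm by blast
  moreover have "succ_Q N \<theta> M = 1"
    using M unfolding succ_Q_def by simp
  moreover have "(2 / (1 + sin \<theta>)) ^ N > 1"
    using sin assms(1) by (intro one_less_power) auto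
  ultimately show ?thesis
    by (simp add: AQ_eq[OF sin(1)] AC_eq_1[OF assms(1)]) blast
qed

end
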